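(* Let $M\subset\mathbb{P}$ and write $\mathrm{pop}=\mathrm{pop}_M$. (1) For $\operatorname{Re}(s)>1$, $$\sum_{p\in M}p^{-s}=\sum_{n=1}^{\infty}\frac{\mu(n)}{n}\ln Z_M(ns),$$ where $\ln Z_M(w)=-\sum_{p\in M}\ln(1-p^{-w})$ with the principal branch of the logarithm. (2) For $|x|<1$ let $l_{\mathrm{pop}}(x)=\sum_{k\in\mathrm{pop}}\frac{x^k}{k}$. Then for $|x|<1$, $$\sum_{n\in\mathrm{pop}}\frac{\mu(n)}{n}\,l_{\mathrm{pop}}(x^n)=x,\qquad l_{\mathrm{pop}}(x)=\sum_{n\in\mathrm{pop}_{\mathbb{P}\setminus M}}\frac{\mu(n)}{n}\ln\frac{1}{1-x^n},$$ and consequently, for $\operatorname{Re}(s)>1$, $$\sum_{n\in\mathrm{pop}}\frac{\mu(n)}{n}\Big(\sum_{p\in M}l_{\mathrm{pop}}(p^{-ns})\Big)=\sum_{p\in M}p^{-s}.$$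
   Context: $\mathbb{P}$ is the set of primes; $\mu$ is the Möbius function. For $M\subset\mathbb{P}$, $\mathrm{pop}_M$ is the set of positive integers all of whose prime factors lie in $M$ (including $1$), and $Z_M(s)=\prod_{p\in M}(1-p^{-s})^{-1}=\sum_{n\in\mathrm{pop}_M}n^{-s}$ for $\operatorname{Re}(s)>1$. *)

theory Defs
  imports "HOL-Analysis.Analysis" "HOL-Computational_Algebra.Computational_Algebra"
begin

text \<open>Moebius function: mu(n) = (-1)^(number of prime factors) for squarefree n > 0,
  0 otherwise (and mu(0) = 0 by convention; 0 never occurs in the sums).\<close>
definition moebius :: "nat \<Rightarrow> int" where
  "moebius n = (if n > 0 \<and> squarefree n then (-1) ^ card (prime_factors n) else 0)"

definition pop :: "nat set \<Rightarrow> nat set" where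
  "pop M = {n. n > 0 \<and> prime_factors n \<subseteq> M}"

definition lnZ :: "nat set \<Rightarrow> complex \<Rightarrow> complex" where
  "lnZ M w = - (\<Sum>\<^sub>\<infinity>p\<in>M. Ln (1 - (of_nat p) powr (-w)))"

definition lpop :: "nat set \<Rightarrow> complex \<Rightarrow> complex" where
  "lpop M x = (\<Sum>\<^sub>\<infinity>k\<in>pop M. x ^ k / of_nat k)"

end

theory Submission
  imports Defs
begin

(* Expanding every logarithm as a power series turns each identity into a double series
   sum_{n in A} a(n)/n sum_{k in K} z^(nk)/k with |a(n)| <= 1 and |z| < 1.  It converges
   absolutely (its terms are dominated by |z|^(n+k-1)), so it may be regrouped by m = nk into
   sum_{m >= 1} c(m) z^m/m with c(m) = sum {a(n) | n in A, n dvd m, m/n in K}.  For a = mu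
   these coefficients are divisor sums of mu over pop sets, and
   sum {mu(d) | d dvd m, d in pop_N} = [m has no prime factor in N]
   (the squarefree such d correspond to the subsets of those prime factors).  This gives
   c(m) = [m = 1] when A = K = pop_M, and c(m) = [m in pop_M] when A = pop_(P - M) and K is
   all of N+.  For the Dirichlet series one takes z = p^(-s); the additional sum over p in M
   can be interchanged with the others because sum_p |p^(-s)| converges for Re s > 1. *)

section \<open>Moebius sums over pop sets\<close>

lemma sum_Pow_neg_one_power_card:
  assumes "finite Q"
  shows "(\<Sum>S\<in>Pow Q. (-1::int) ^ card S) = (if Q = {} then 1 else 0)"
proof -
  have "(\<Prod>x\<in>Q. (1::int) - 1) = (\<Sum>S\<in>Pow Q. (-1) ^ card S * (\<Prod>x\<in>S. 1) * (\<Prod>x\<in>Q-S. 1))"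
    by (rule prod_diff_conv_sum[OF assms])
  moreover have "Q \<noteq> {} \<Longrightarrow> (0::int) ^ card Q = 0"
    using assms by (simp add: card_gt_0_iff)
  ultimately show ?thesis
    using assms by auto
qed

lemma squarefree_imp_pos_nat: "squarefree (d::nat) \<Longrightarrow> d > 0"
  by (cases "d = 0") auto

lemma multiplicity_squarefree:
  fixes d :: nat
  assumes "squarefree d" "p \<in> prime_factors d"
  shows "multiplicity p d = 1"
  using assms squarefree_factorial_semiring'[of d] squarefree_imp_pos_nat[OF assms(1)] by simp

lemma prod_prime_factors_squarefree:
  fixes d :: nat
  assumes "squarefree d"
  shows "\<Prod>(prime_factors d) = d"
proof -
  have "\<And>p. p \<in> prime_factors d \<Longrightarrow> p ^ multiplicity p d = p"
    using assms multiplicity_squarefree by simp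
  then have "\<Prod>(prime_factors d) = (\<Prod>p\<in>prime_factors d. p ^ multiplicity p d)"
    by simp
  also have "\<dots> = d"
    using prod_prime_factors[of d] squarefree_imp_pos_nat[OF assms] by simp
  finally show ?thesis .
qed

lemma
  fixes S :: "nat set"
  assumes "finite S" "\<And>p. p \<in> S \<Longrightarrow> prime p"
  shows prime_factors_prod_primes: "prime_factors (\<Prod>S) = S"
    and squarefree_prod_primes: "squarefree (\<Prod>S)"
proof -
  have "0 \<notin> S" using assms(2) by force
  then have "prime_factors (\<Prod>S) = (\<Union>p\<in>S. prime_factors p)"
    using prime_factors_prod[OF assms(1), of id] by simp
  also have "\<dots> = S"
    using assms(2) by (simp add: prime_prime_factors)
  finally show "prime_factors (\<Prod>S) = S" .
  show "squarefree (\<Prod>S)"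
    using squarefree_prod_coprime[of S id] assms(2)
    by (simp add: primes_coprime squarefree_prime)
qed

lemma moebius_prod_primes:
  fixes S :: "nat set"
  assumes "finite S" "\<And>p. p \<in> S \<Longrightarrow> prime p"
  shows "moebius (\<Prod>S) = (-1) ^ card S"
  using prime_factors_prod_primes[OF assms] squarefree_prod_primes[OF assms]
  by (simp add: moebius_def squarefree_imp_pos_nat)

lemma squarefree_dvd_if_prime_factors_subset:
  fixes d m :: nat
  assumes "squarefree d" "m \<noteq> 0" "prime_factors d \<subseteq> prime_factors m"
  shows "d dvd m"
proof (rule multiplicity_le_imp_dvd)
  show "d \<noteq> 0" using squarefree_imp_pos_nat[OF assms(1)] by simp
  fix p :: nat assume "prime p"
  show "multiplicity p d \<le> multiplicity p m"
  proof (cases "p \<in> prime_factors d")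
    case True
    then have "multiplicity p d = 1"
      using assms(1) multiplicity_squarefree by blast
    moreover have "multiplicity p m > 0"
      using True assms(2,3) prime_factors_multiplicity by auto
    ultimately show ?thesis by simp
  next
    case False
    then show ?thesis
      using \<open>prime p\<close> \<open>d \<noteq> 0\<close> by (simp add: prime_factors_multiplicity)
  qed
qed

lemma sum_moebius_divisors_pop:
  fixes m :: nat
  assumes "m > 0"
  shows "(\<Sum>d | d \<in> pop N \<and> d dvd m. moebius d) = (if prime_factors m \<inter> N = {} then 1 else 0)"
proof -
  define Q where "Q = prime_factors m \<inter> N"
  have "(\<Sum>d | d \<in> pop N \<and> d dvd m. moebius d)
      = (\<Sum>d | squarefree d \<and> d dvd m \<and> prime_factors d \<subseteq> N. moebius d)"
  proof (rule sum.mono_neutral_right)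
    show "finite {d. d \<in> pop N \<and> d dvd m}"
      using assms by (auto intro: finite_subset[OF _ finite_divisors_nat])
  qed (auto simp: pop_def moebius_def squarefree_imp_pos_nat)
  also have "\<dots> = (\<Sum>S\<in>Pow Q. moebius (\<Prod>S))"
  proof (rule sum.reindex_bij_witness[of _ Prod prime_factors])
    fix d assume d: "d \<in> {d. squarefree d \<and> d dvd m \<and> prime_factors d \<subseteq> N}"
    then show "\<Prod>(prime_factors d) = d"
      by (simp add: prod_prime_factors_squarefree)
    then show "moebius (\<Prod>(prime_factors d)) = moebius d" by simp
    have "prime_factors d \<subseteq> prime_factors m"
      using d assms by (intro dvd_prime_factors) auto
    with d show "prime_factors d \<in> Pow Q" by (auto simp: Q_def)
  next
    fix S assume S: "S \<in> Pow Q"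
    then have "finite S" "\<And>p. p \<in> S \<Longrightarrow> prime p"
      by (auto simp: Q_def intro: finite_subset)
    note prod_S = prime_factors_prod_primes[OF this] squarefree_prod_primes[OF this]
    then show "prime_factors (\<Prod>S) = S" by simp
    have "\<Prod>S dvd m"
      using prod_S S assms by (intro squarefree_dvd_if_prime_factors_subset) (auto simp: Q_def)
    with prod_S S show "\<Prod>S \<in> {d. squarefree d \<and> d dvd m \<and> prime_factors d \<subseteq> N}"
      by (auto simp: Q_def)
  qed
  also have "\<dots> = (\<Sum>S\<in>Pow Q. (-1) ^ card S)"
    by (intro sum.cong refl moebius_prod_primes) (auto simp: Q_def intro: finite_subset)
  also have "\<dots> = (if Q = {} then 1 else 0)"
    by (rule sum_Pow_neg_one_power_card) (simp add: Q_def)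
  finally show ?thesis unfolding Q_def .
qed

lemma pop_subset_atLeast_1: "pop M \<subseteq> {1..}"
  by (auto simp: pop_def)

lemma pop_primes: "pop {p. prime p} = {1..}"
  by (auto simp: pop_def)

lemma mult_in_pop_iff: "a > 0 \<Longrightarrow> b > 0 \<Longrightarrow> a * b \<in> pop M \<longleftrightarrow> a \<in> pop M \<and> b \<in> pop M"
  by (auto simp: pop_def prime_factors_product)

lemma pop_dvd: "m \<in> pop M \<Longrightarrow> n dvd m \<Longrightarrow> n \<in> pop M"
  using dvd_prime_factors[of m n] by (auto simp: pop_def dvd_pos_nat)

lemma pop_eq_1_iff:
  assumes "m \<in> pop M"
  shows "prime_factors m \<inter> M = {} \<longleftrightarrow> m = 1"
proof -
  have "prime_factors m \<inter> M = prime_factors m" "m > 0"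
    using assms by (auto simp: pop_def)
  then show ?thesis
    by (metis prime_factorization_empty_iff set_mset_eq_empty_iff nat_dvd_1_iff_1 neq0_conv)
qed

lemma sum_moebius_pop_convolution:
  fixes m :: nat
  assumes "m \<ge> 1"
  shows "(\<Sum>n\<in>{n\<in>pop M. n dvd m \<and> m div n \<in> pop M}. moebius n) = (if m = 1 then 1 else 0)"
proof (cases "m \<in> pop M")
  case True
  have "{n\<in>pop M. n dvd m \<and> m div n \<in> pop M} = {d. d \<in> pop M \<and> d dvd m}"
    using True by (auto intro: pop_dvd) (metis dvd_div_mult_self dvd_triv_left pop_dvd)
  then show ?thesis
    using sum_moebius_divisors_pop[of m M] True assms pop_eq_1_iff by simp
next
  case False
  have no_terms: "{n\<in>pop M. n dvd m \<and> m div n \<in> pop M} = {}"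
  proof safe
    fix n assume "n \<in> pop M" "n dvd m" "m div n \<in> pop M"
    then have "n * (m div n) \<in> pop M"
      using mult_in_pop_iff[of n "m div n" M] by (simp add: pop_def)
    with \<open>n dvd m\<close> False show "n \<in> {}" by simp
  qed
  moreover have "m \<noteq> 1" using False by (auto simp: pop_def)
  ultimately show ?thesis unfolding no_terms by simp
qed

lemma sum_moebius_pop_complement:
  fixes m :: nat
  assumes "m \<ge> 1"
  shows "(\<Sum>n\<in>{n\<in>pop ({p. prime p} - M). n dvd m \<and> m div n \<in> {1..}}. moebius n)
       = (if m \<in> pop M then 1 else 0)"
proof -
  have "{n\<in>pop ({p. prime p} - M). n dvd m \<and> m div n \<in> {1..}} = {d. d \<in> pop ({p. prime p} - M) \<and> d dvd m}"
    using assms by (auto simp: pop_def dvd_div_eq_0_iff Suc_le_eq)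
  moreover have "prime_factors m \<inter> ({p. prime p} - M) = {} \<longleftrightarrow> m \<in> pop M"
    using assms by (auto simp: pop_def)
  ultimately show ?thesis
    using sum_moebius_divisors_pop[of m "{p. prime p} - M"] assms by simp
qed

lemma norm_of_int_moebius_le: "norm (of_int (moebius n) :: complex) \<le> 1"
  by (auto simp: moebius_def norm_power)

section \<open>Regrouping logarithmic double series\<close>

definition log_series_on :: "nat set \<Rightarrow> complex \<Rightarrow> complex" where
  "log_series_on K y = (\<Sum>\<^sub>\<infinity>k\<in>K. y ^ k / of_nat k)"

lemma Ln_one_over_one_minus:
  fixes y :: complex
  assumes "norm y < 1"
  shows "Ln (1 / (1 - y)) = - Ln (1 - y)"
proof -
  have "Re y < 1" using assms abs_Re_le_cmod[of y] by linarith
  then have "1 - y \<notin> \<real>\<^sub>\<le>\<^sub>0" by (auto simp: complex_nonpos_Reals_iff)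
  then show ?thesis using Ln_inverse[of "1 - y"] by (simp add: inverse_eq_divide)
qed

lemma has_sum_log_series:
  fixes y :: complex
  assumes "norm y < 1"
  shows "((\<lambda>k. y ^ k / of_nat k) has_sum Ln (1 / (1 - y))) {1..}"
proof -
  have "(\<lambda>k. - ((- (- y)) ^ k) / of_nat k) sums Ln (1 + (- y))"
    using Ln_series'[of "- y"] assms by simp
  then have "(\<lambda>k. y ^ k / of_nat k) sums (- Ln (1 - y))"
    using sums_minus by fastforce
  moreover have "summable (\<lambda>k. norm (y ^ k / of_nat k))"
  proof (rule summable_comparison_test)
    show "\<exists>N. \<forall>k\<ge>N. norm (norm (y ^ k / of_nat k)) \<le> norm y ^ k"
    proof (intro exI[of _ 1] allI impI)
      fix k :: nat assume "k \<ge> 1"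
      then have "norm y ^ k / real k \<le> norm y ^ k / 1"
        by (intro divide_left_mono) auto
      then show "norm (norm (y ^ k / of_nat k)) \<le> norm y ^ k"
        by (simp add: norm_divide norm_power)
    qed
    show "summable (\<lambda>k. norm y ^ k)" using assms by (simp add: summable_geometric)
  qed
  ultimately have "((\<lambda>k. y ^ k / of_nat k) has_sum (- Ln (1 - y))) UNIV"
    by (intro norm_summable_imp_has_sum)
  then show ?thesis
    using Ln_one_over_one_minus[OF assms] by (subst has_sum_cong_neutral) auto
qed

lemma log_series_on_atLeast_1:
  "norm y < 1 \<Longrightarrow> log_series_on {1..} y = Ln (1 / (1 - y))"
  unfolding log_series_on_def by (intro infsumI has_sum_log_series)

lemma summable_on_times_nonneg:
  fixes f g :: "_ \<Rightarrow> real"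
  assumes "f summable_on A" "g summable_on B"
    and "\<And>x. x \<in> A \<Longrightarrow> f x \<ge> 0" "\<And>y. y \<in> B \<Longrightarrow> g y \<ge> 0"
  shows "(\<lambda>(x, y). f x * g y) summable_on A \<times> B"
proof -
  have "(\<lambda>z. (\<lambda>(x, y). f x * g y) z) summable_on Sigma A (\<lambda>_. B)"
  proof (rule summable_on_SigmaI[where g = "\<lambda>x. f x * infsum g B"])
    show "((\<lambda>y. (\<lambda>(x, y). f x * g y) (x, y)) has_sum f x * infsum g B) B" for x
      using has_sum_cmult_right[OF has_sum_infsum[OF assms(2)]] by simp
    show "(\<lambda>x. f x * infsum g B) summable_on A"
      using assms(1) by (rule summable_on_cmult_left)
  qed (use assms(3,4) in auto)
  then show ?thesis by simp
qed

lemma summable_on_geometric_shifted: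
  fixes \<rho> :: real
  assumes "0 \<le> \<rho>" "\<rho> < 1"
  shows "(\<lambda>n. \<rho> ^ (n - 1)) summable_on {1..}"
proof -
  have "((\<lambda>n. \<rho> ^ n) has_sum (1 / (1 - \<rho>))) UNIV"
    using assms geometric_sums[of \<rho>] by (intro sums_nonneg_imp_has_sum) auto
  then have "((\<lambda>n. \<rho> ^ (n - 1)) \<circ> Suc) summable_on UNIV"
    by (auto simp: o_def summable_on_def)
  moreover have "range Suc = {1..}"
    by (auto simp: image_iff dest: Suc_le_D)
  ultimately show ?thesis
    using summable_on_reindex[of Suc UNIV "\<lambda>n. \<rho> ^ (n - 1)"] by simp
qed

lemma summable_on_geometric_pairs:
  fixes \<rho> :: real
  assumes "0 \<le> \<rho>" "\<rho> < 1"
  shows "(\<lambda>(n, k). \<rho> ^ (n - 1) * \<rho> ^ (k - 1)) summable_on {1..} \<times> {1..}"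
  using summable_on_geometric_shifted[OF assms] assms(1)
  by (intro summable_on_times_nonneg) auto

lemma power_mult_le_geometric:
  fixes r \<rho> :: real
  assumes "0 \<le> r" "r \<le> \<rho>" "\<rho> \<le> 1" "n \<ge> 1" "k \<ge> 1"
  shows "r ^ (n * k) \<le> r * (\<rho> ^ (n - 1) * \<rho> ^ (k - 1))"
proof -
  obtain a b where ab: "n = Suc a" "k = Suc b"
    using assms(4,5) by (metis Suc_le_D One_nat_def)
  have "r ^ (n * k) = r * r ^ (n * k - 1)"
    by (simp add: ab)
  also have "r ^ (n * k - 1) \<le> \<rho> ^ (n * k - 1)"
    using assms by (intro power_mono) auto
  also have "\<rho> ^ (n * k - 1) \<le> \<rho> ^ ((n - 1) + (k - 1))"
    by (rule power_decreasing) (use assms ab in auto)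
  finally show ?thesis
    using assms(1) by (simp add: power_add mult_left_mono)
qed

lemma norm_lambert_term_le:
  fixes a z :: complex
  assumes "norm a \<le> 1" "norm z \<le> \<rho>" "\<rho> \<le> 1" "n \<ge> 1" "k \<ge> 1"
  shows "norm (a / of_nat (n * k) * z ^ (n * k)) \<le> norm z * (\<rho> ^ (n - 1) * \<rho> ^ (k - 1))"
proof -
  have "1 \<le> real n * real k"
    using assms(4,5) mult_mono[of 1 "real n" 1 "real k"] by simp
  then have "norm a / of_nat (n * k) \<le> 1"
    using assms(1) by (simp add: divide_le_eq_1)
  have "norm (a / of_nat (n * k) * z ^ (n * k)) = norm a / of_nat (n * k) * norm z ^ (n * k)"
    by (simp add: norm_mult norm_divide norm_power)
  also have "\<dots> \<le> norm z ^ (n * k)"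
    using \<open>norm a / of_nat (n * k) \<le> 1\<close> by (intro mult_left_le_one_le) auto
  also have "\<dots> \<le> norm z * (\<rho> ^ (n - 1) * \<rho> ^ (k - 1))"
    using assms by (intro power_mult_le_geometric) auto
  finally show ?thesis .
qed

lemma has_sum_group_by_product:
  fixes f :: "nat \<Rightarrow> nat \<Rightarrow> 'a::{topological_comm_monoid_add, t3_space}"
  assumes "((\<lambda>(n, k). f n k) has_sum S) (A \<times> K)" "A \<subseteq> {1..}" "K \<subseteq> {1..}"
  shows "((\<lambda>m. \<Sum>n\<in>{n\<in>A. n dvd m \<and> m div n \<in> K}. f n (m div n)) has_sum S) {1..}"
proof -
  define D where "D m = {n\<in>A. n dvd m \<and> m div n \<in> K}" for m
  have regrouped: "((\<lambda>(n, k). f n k) has_sum S) (A \<times> K) \<longleftrightarrow>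
        ((\<lambda>(m, n). f n (m div n)) has_sum S) (Sigma {1..} D)"
    by (rule has_sum_reindex_bij_witness[of _ "\<lambda>(m, n). (n, m div n)" "\<lambda>(n, k). (n * k, n)"])
       (use assms(2,3) in \<open>force simp: D_def\<close>)+
  have "((\<lambda>m. \<Sum>n\<in>D m. f n (m div n)) has_sum S) {1..}"
  proof (rule has_sum_SigmaD)
    show "((\<lambda>(m, n). f n (m div n)) has_sum S) (Sigma {1..} D)"
      using regrouped assms(1) by simp
  next
    fix m :: nat assume "m \<in> {1..}"
    then have "finite (D m)"
      by (auto simp: D_def intro: finite_subset[OF _ finite_divisors_nat])
    then show "((\<lambda>n. (\<lambda>(m, n). f n (m div n)) (m, n)) has_sum (\<Sum>n\<in>D m. f n (m div n))) (D m)"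
      by simp
  qed
  then show ?thesis unfolding D_def .
qed

lemma lambert_family_summable:
  fixes z :: "'p \<Rightarrow> complex" and a :: "nat \<Rightarrow> complex"
  assumes z: "(\<lambda>p. norm (z p)) summable_on P" "\<And>p. p \<in> P \<Longrightarrow> norm (z p) \<le> \<rho>"
    and \<rho>: "0 \<le> \<rho>" "\<rho> < 1"
    and A: "A \<subseteq> {1..}" and K: "K \<subseteq> {1..}" and a: "\<And>n. norm (a n) \<le> 1"
  shows "(\<lambda>(p, n, k). a n / of_nat (n * k) * z p ^ (n * k)) summable_on P \<times> (A \<times> K)"
proof -
  have "(\<lambda>(p, n, k). norm (z p) * (\<rho> ^ (n - 1) * \<rho> ^ (k - 1))) summable_on P \<times> ({1..} \<times> {1..})"
    using summable_on_times_nonneg[OF z(1) summable_on_geometric_pairs[OF \<rho>]] \<rho>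
    by (simp add: case_prod_unfold)
  then have "(\<lambda>(p, n, k). norm (z p) * (\<rho> ^ (n - 1) * \<rho> ^ (k - 1))) summable_on P \<times> (A \<times> K)"
    by (rule summable_on_subset) (use A K in auto)
  then have "(\<lambda>x. norm ((\<lambda>(p, n, k). a n / of_nat (n * k) * z p ^ (n * k)) x)) summable_on P \<times> (A \<times> K)"
  proof (rule Infinite_Sum.abs_summable_on_comparison_test')
    fix x assume "x \<in> P \<times> (A \<times> K)"
    then obtain p n k where "x = (p, n, k)" "p \<in> P" "n \<in> A" "k \<in> K" by auto
    with A K have "x = (p, n, k)" "p \<in> P" "n \<ge> 1" "k \<ge> 1" by auto
    then show "norm ((\<lambda>(p, n, k). a n / of_nat (n * k) * z p ^ (n * k)) x)
        \<le> (\<lambda>(p, n, k). norm (z p) * (\<rho> ^ (n - 1) * \<rho> ^ (k - 1))) x"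
      using norm_lambert_term_le[OF a z(2)] \<rho> by simp
  qed
  then show ?thesis
    by (simp flip: summable_on_iff_abs_summable_on_complex)
qed

lemma lambert_double_has_sum:
  fixes z :: complex and a h :: "nat \<Rightarrow> complex"
  assumes z: "norm z < 1" and A: "A \<subseteq> {1..}" and K: "K \<subseteq> {1..}"
    and a: "\<And>n. norm (a n) \<le> 1"
    and h: "\<And>m. m \<ge> 1 \<Longrightarrow> (\<Sum>n\<in>{n\<in>A. n dvd m \<and> m div n \<in> K}. a n) = h m"
  shows "((\<lambda>(n, k). a n / of_nat (n * k) * z ^ (n * k)) has_sum
           (\<Sum>\<^sub>\<infinity>m\<in>{1..}. h m * z ^ m / of_nat m)) (A \<times> K)"
proof -
  define F where "F = (\<lambda>(n, k). a n / of_nat (n * k) * z ^ (n * k))"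
  have "(\<lambda>(w, n, k). a n / of_nat (n * k) * id w ^ (n * k)) summable_on {z} \<times> (A \<times> K)"
    by (rule lambert_family_summable[of id "{z}" "norm z"]) (use z A K a in auto)
  then have "F summable_on A \<times> K"
    using summable_on_SigmaD1[of "\<lambda>w (n, k). a n / of_nat (n * k) * w ^ (n * k)" "{z}" "\<lambda>_. A \<times> K" z]
    by (simp add: F_def case_prod_unfold)
  then have "(F has_sum infsum F (A \<times> K)) (A \<times> K)"
    by simp
  then have "((\<lambda>m. \<Sum>n\<in>{n\<in>A. n dvd m \<and> m div n \<in> K}. a n / of_nat (n * (m div n)) * z ^ (n * (m div n)))
      has_sum infsum F (A \<times> K)) {1..}"
    unfolding F_def by (intro has_sum_group_by_product A K) simp
  also have "?this \<longleftrightarrow> ((\<lambda>m. h m * z ^ m / of_nat m) has_sum infsum F (A \<times> K)) {1..}"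
  proof (intro has_sum_cong)
    fix m :: nat assume "m \<in> {1..}"
    then have "(\<Sum>n\<in>{n\<in>A. n dvd m \<and> m div n \<in> K}. a n / of_nat (n * (m div n)) * z ^ (n * (m div n)))
        = (\<Sum>n\<in>{n\<in>A. n dvd m \<and> m div n \<in> K}. a n) / of_nat m * z ^ m"
      by (simp add: sum_distrib_right sum_divide_distrib)
    also have "\<dots> = h m * z ^ m / of_nat m"
      using h \<open>m \<in> {1..}\<close> by simp
    finally show "(\<Sum>n\<in>{n\<in>A. n dvd m \<and> m div n \<in> K}. a n / of_nat (n * (m div n)) * z ^ (n * (m div n)))
        = h m * z ^ m / of_nat m" .
  qed
  finally have "infsum F (A \<times> K) = (\<Sum>\<^sub>\<infinity>m\<in>{1..}. h m * z ^ m / of_nat m)"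
    by (simp add: infsumI)
  with \<open>(F has_sum infsum F (A \<times> K)) (A \<times> K)\<close> show ?thesis
    unfolding F_def by simp
qed

lemma infsum_lambert_row:
  "(\<Sum>\<^sub>\<infinity>k\<in>K. a / of_nat (n * k) * z ^ (n * k)) = a / of_nat n * log_series_on K (z ^ n)"
proof -
  have "(\<Sum>\<^sub>\<infinity>k\<in>K. a / of_nat (n * k) * z ^ (n * k)) = (\<Sum>\<^sub>\<infinity>k\<in>K. a / of_nat n * ((z ^ n) ^ k / of_nat k))"
    by (intro infsum_cong) (simp add: power_mult)
  also have "\<dots> = a / of_nat n * log_series_on K (z ^ n)"
    unfolding log_series_on_def by (rule infsum_cmult_right')
  finally show ?thesis .
qed

lemma has_sum_lambert:
  fixes z :: complex and a h :: "nat \<Rightarrow> complex"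
  assumes "norm z < 1" "A \<subseteq> {1..}" "K \<subseteq> {1..}" "\<And>n. norm (a n) \<le> 1"
    and "\<And>m. m \<ge> 1 \<Longrightarrow> (\<Sum>n\<in>{n\<in>A. n dvd m \<and> m div n \<in> K}. a n) = h m"
  shows "((\<lambda>n. a n / of_nat n * log_series_on K (z ^ n)) has_sum
           (\<Sum>\<^sub>\<infinity>m\<in>{1..}. h m * z ^ m / of_nat m)) A"
proof -
  define f where "f n k = a n / of_nat (n * k) * z ^ (n * k)" for n k
  have double: "((\<lambda>(n, k). f n k) has_sum (\<Sum>\<^sub>\<infinity>m\<in>{1..}. h m * z ^ m / of_nat m)) (A \<times> K)"
    unfolding f_def by (rule lambert_double_has_sum[OF assms])
  have "infsum (f n) K = a n / of_nat n * log_series_on K (z ^ n)" for n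
    unfolding f_def by (rule infsum_lambert_row)
  moreover have "((\<lambda>n. infsum (f n) K) has_sum (\<Sum>\<^sub>\<infinity>m\<in>{1..}. h m * z ^ m / of_nat m)) A"
    using double
  proof (rule has_sum_SigmaD)
    show "((\<lambda>k. (\<lambda>(n, k). f n k) (n, k)) has_sum infsum (f n) K) K" if "n \<in> A" for n
      using summable_on_SigmaD1[OF has_sum_imp_summable[OF double] that] by simp
  qed
  ultimately show ?thesis by simp
qed

lemma has_sum_lambert_infsum:
  fixes z :: "'p \<Rightarrow> complex" and a h :: "nat \<Rightarrow> complex"
  assumes z: "(\<lambda>p. norm (z p)) summable_on P" "\<And>p. p \<in> P \<Longrightarrow> norm (z p) \<le> \<rho>"
    and \<rho>: "0 \<le> \<rho>" "\<rho> < 1"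
    and A: "A \<subseteq> {1..}" and K: "K \<subseteq> {1..}" and a: "\<And>n. norm (a n) \<le> 1"
    and h: "\<And>m. m \<ge> 1 \<Longrightarrow> (\<Sum>n\<in>{n\<in>A. n dvd m \<and> m div n \<in> K}. a n) = h m"
  shows "((\<lambda>n. a n / of_nat n * (\<Sum>\<^sub>\<infinity>p\<in>P. log_series_on K (z p ^ n))) has_sum
           (\<Sum>\<^sub>\<infinity>p\<in>P. \<Sum>\<^sub>\<infinity>m\<in>{1..}. h m * z p ^ m / of_nat m)) A"
proof -
  define \<Phi> where "\<Phi> = (\<lambda>(p, n, k). a n / of_nat (n * k) * z p ^ (n * k))"
  define S where "S = (\<Sum>\<^sub>\<infinity>p\<in>P. \<Sum>\<^sub>\<infinity>m\<in>{1..}. h m * z p ^ m / of_nat m)"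
  have \<Phi>_sum: "(\<Phi> has_sum infsum \<Phi> (P \<times> (A \<times> K))) (P \<times> (A \<times> K))"
    unfolding \<Phi>_def using lambert_family_summable[OF z \<rho> A K a] by simp
  have "((\<lambda>p. \<Sum>\<^sub>\<infinity>m\<in>{1..}. h m * z p ^ m / of_nat m) has_sum infsum \<Phi> (P \<times> (A \<times> K))) P"
  proof (rule has_sum_SigmaD[OF \<Phi>_sum])
    fix p assume "p \<in> P"
    then have "norm (z p) < 1" using z(2) \<rho> by fastforce
    then show "((\<lambda>y. \<Phi> (p, y)) has_sum (\<Sum>\<^sub>\<infinity>m\<in>{1..}. h m * z p ^ m / of_nat m)) (A \<times> K)"
      unfolding \<Phi>_def using lambert_double_has_sum[OF _ A K a h] by (simp add: case_prod_unfold)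
  qed
  then have "infsum \<Phi> (P \<times> (A \<times> K)) = S"
    unfolding S_def by (simp add: infsumI)
  with \<Phi>_sum have swapped: "((\<lambda>(n, p, k). \<Phi> (p, n, k)) has_sum S) (A \<times> (P \<times> K))"
    by (subst has_sum_reindex_bij_witness[of _ "\<lambda>(p, n, k). (n, p, k)" "\<lambda>(n, p, k). (p, n, k)"]) auto
  then show ?thesis
    unfolding S_def
  proof (rule has_sum_SigmaD)
    fix n assume "n \<in> A"
    have row: "(\<lambda>(p, k). \<Phi> (p, n, k)) summable_on P \<times> K"
      using summable_on_SigmaD1[OF has_sum_imp_summable[OF swapped] \<open>n \<in> A\<close>]
      by (simp add: case_prod_unfold)
    have "(\<Sum>\<^sub>\<infinity>(p, k)\<in>P \<times> K. \<Phi> (p, n, k)) = (\<Sum>\<^sub>\<infinity>p\<in>P. \<Sum>\<^sub>\<infinity>k\<in>K. \<Phi> (p, n, k))"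
      using infsum_Sigma_banach[OF row] by (simp add: case_prod_unfold)
    also have "\<dots> = a n / of_nat n * (\<Sum>\<^sub>\<infinity>p\<in>P. log_series_on K (z p ^ n))"
      unfolding \<Phi>_def by (simp only: prod.case infsum_lambert_row infsum_cmult_right')
    finally have row_sum: "(\<Sum>\<^sub>\<infinity>(p, k)\<in>P \<times> K. \<Phi> (p, n, k))
        = a n / of_nat n * (\<Sum>\<^sub>\<infinity>p\<in>P. log_series_on K (z p ^ n))" .
    show "((\<lambda>y. (\<lambda>(n, p, k). \<Phi> (p, n, k)) (n, y)) has_sum
        a n / of_nat n * (\<Sum>\<^sub>\<infinity>p\<in>P. log_series_on K (z p ^ n))) (P \<times> K)"
      using has_sum_infsum[OF row] unfolding row_sum by (simp add: case_prod_unfold)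
  qed
qed

lemma infsum_delta_power_series:
  fixes z :: complex
  shows "(\<Sum>\<^sub>\<infinity>m\<in>{1..}. (if m = 1 then 1 else 0) * z ^ m / of_nat m) = z"
  by (rule infsumI, rule has_sum_finite_neutralI[of "{1}"]) auto

section \<open>Sums over primes\<close>

lemma powr_of_nat_mult_exponent:
  fixes s :: complex
  assumes "p > 0"
  shows "(of_nat p :: complex) powr (- (of_nat n * s)) = (of_nat p powr (- s)) ^ n"
proof -
  have "(of_nat p :: complex) powr (- (of_nat n * s)) = exp (of_nat n * (- s * Ln (of_nat p)))"
    using assms by (simp add: powr_def mult.assoc)
  also have "\<dots> = exp (- s * Ln (of_nat p)) ^ n"
    by (rule exp_of_nat_mult)
  also have "\<dots> = (of_nat p powr (- s)) ^ n"
    using assms by (simp add: powr_def)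
  finally show ?thesis .
qed

lemma norm_of_nat_powr:
  fixes s :: complex
  shows "norm ((of_nat p :: complex) powr (- s)) = real p powr (- Re s)"
  by (subst norm_powr_real_powr) auto

lemma norm_prime_powr_le:
  fixes s :: complex
  assumes "Re s > 1" "prime p"
  shows "norm ((of_nat p :: complex) powr (- s)) \<le> 2 powr (- Re s)"
  unfolding norm_of_nat_powr using assms prime_ge_2_nat[of p] by (intro powr_mono2') auto

lemma summable_on_norm_powr:
  fixes s :: complex
  assumes "Re s > 1"
  shows "(\<lambda>p. norm ((of_nat p :: complex) powr (- s))) summable_on M"
proof -
  have "summable (\<lambda>n. real n powr (- Re s))"
    using assms by (subst summable_real_powr_iff) simp
  then have "(\<lambda>n. real n powr (- Re s)) summable_on UNIV"
    using sums_nonneg_imp_has_sum summable_on_def summable_sums by fastforce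
  then show ?thesis
    unfolding norm_of_nat_powr by (rule summable_on_subset) simp
qed

lemma has_sum_prime_lambert:
  fixes s :: complex and a :: "nat \<Rightarrow> complex"
  assumes s: "Re s > 1" and M: "M \<subseteq> {p. prime p}"
    and "A \<subseteq> {1..}" "K \<subseteq> {1..}" "\<And>n. norm (a n) \<le> 1"
    and "\<And>m. m \<ge> 1 \<Longrightarrow> (\<Sum>n\<in>{n\<in>A. n dvd m \<and> m div n \<in> K}. a n) = (if m = 1 then 1 else 0)"
  shows "((\<lambda>n. a n / of_nat n * (\<Sum>\<^sub>\<infinity>p\<in>M. log_series_on K ((of_nat p powr (- s)) ^ n)))
           has_sum (\<Sum>\<^sub>\<infinity>p\<in>M. of_nat p powr (- s))) A"
proof -
  have "(2::real) powr (- Re s) < 1"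
    using s by (intro powr_less_one) auto
  then have "((\<lambda>n. a n / of_nat n * (\<Sum>\<^sub>\<infinity>p\<in>M. log_series_on K ((of_nat p powr (- s)) ^ n))) has_sum
      (\<Sum>\<^sub>\<infinity>p\<in>M. \<Sum>\<^sub>\<infinity>m\<in>{1..}. (if m = 1 then 1 else 0) * (of_nat p powr (- s)) ^ m / of_nat m)) A"
    using M by (intro has_sum_lambert_infsum[OF summable_on_norm_powr[OF s] norm_prime_powr_le[OF s] _ _ assms(3-6)]) auto
  then show ?thesis
    unfolding infsum_delta_power_series .
qed

lemma lnZ_eq_infsum_log_series:
  fixes s :: complex
  assumes s: "Re s > 1" and M: "M \<subseteq> {p. prime p}" and n: "n \<ge> 1"
  shows "lnZ M (of_nat n * s) = (\<Sum>\<^sub>\<infinity>p\<in>M. log_series_on {1..} ((of_nat p powr (- s)) ^ n))"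
proof -
  have "lnZ M (of_nat n * s) = (\<Sum>\<^sub>\<infinity>p\<in>M. - Ln (1 - (of_nat p) powr (- (of_nat n * s))))"
    unfolding lnZ_def by (simp add: infsum_uminus)
  also have "\<dots> = (\<Sum>\<^sub>\<infinity>p\<in>M. log_series_on {1..} ((of_nat p powr (- s)) ^ n))"
  proof (rule infsum_cong)
    fix p assume "p \<in> M"
    then have "prime p" using M by auto
    have "norm ((of_nat p powr (- s)) ^ n) < 1"
      using norm_prime_powr_le[OF s \<open>prime p\<close>] powr_less_one[of 2 "- Re s"] s n
      by (simp add: norm_power power_less_one_iff)
    then show "- Ln (1 - (of_nat p) powr (- (of_nat n * s))) = log_series_on {1..} ((of_nat p powr (- s)) ^ n)"
      using powr_of_nat_mult_exponent[of p n s] prime_gt_0_nat[OF \<open>prime p\<close>]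
        log_series_on_atLeast_1 Ln_one_over_one_minus by simp
  qed
  finally show ?thesis .
qed

lemma has_sum_moebius_lnZ:
  fixes s :: complex
  assumes "Re s > 1" "M \<subseteq> {p. prime p}"
  shows "((\<lambda>n. of_int (moebius n) / of_nat n * lnZ M (of_nat n * s))
           has_sum (\<Sum>\<^sub>\<infinity>p\<in>M. (of_nat p) powr (- s))) {1..}"
proof -
  have "((\<lambda>n. of_int (moebius n) / of_nat n * (\<Sum>\<^sub>\<infinity>p\<in>M. log_series_on {1..} ((of_nat p powr (- s)) ^ n)))
           has_sum (\<Sum>\<^sub>\<infinity>p\<in>M. of_nat p powr (- s))) {1..}"
    using assms norm_of_int_moebius_le sum_moebius_pop_convolution[where M = "{p. prime p}"]
    by (intro has_sum_prime_lambert) (simp_all add: pop_primes flip: of_int_sum)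
  then show ?thesis
    by (rule has_sum_cong[THEN iffD1, rotated]) (simp add: lnZ_eq_infsum_log_series assms)
qed

lemma has_sum_moebius_lpop:
  fixes x :: complex
  assumes "norm x < 1"
  shows "((\<lambda>n. of_int (moebius n) / of_nat n * lpop M (x ^ n)) has_sum x) (pop M)"
proof -
  have "((\<lambda>n. of_int (moebius n) / of_nat n * log_series_on (pop M) (x ^ n)) has_sum
          (\<Sum>\<^sub>\<infinity>m\<in>{1..}. (if m = 1 then 1 else 0) * x ^ m / of_nat m)) (pop M)"
    using sum_moebius_pop_convolution[where M = M]
    by (intro has_sum_lambert[OF assms pop_subset_atLeast_1 pop_subset_atLeast_1 norm_of_int_moebius_le])
       (simp flip: of_int_sum)
  then show ?thesis
    unfolding infsum_delta_power_series by (simp add: lpop_def log_series_on_def)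
qed

lemma has_sum_moebius_log_complement:
  fixes x :: complex
  assumes x: "norm x < 1"
  shows "((\<lambda>n. of_int (moebius n) / of_nat n * Ln (1 / (1 - x ^ n))) has_sum lpop M x)
           (pop ({p. prime p} - M))"
proof -
  have "(\<Sum>\<^sub>\<infinity>m\<in>{1..}. (if m \<in> pop M then 1 else 0) * x ^ m / of_nat m) = lpop M x"
    unfolding lpop_def by (rule infsum_cong_neutral) (use pop_subset_atLeast_1 in auto)
  moreover have "((\<lambda>n. of_int (moebius n) / of_nat n * log_series_on {1..} (x ^ n)) has_sum
          (\<Sum>\<^sub>\<infinity>m\<in>{1..}. (if m \<in> pop M then 1 else 0) * x ^ m / of_nat m)) (pop ({p. prime p} - M))"
    using sum_moebius_pop_complement[where M = M]
    by (intro has_sum_lambert[OF x pop_subset_atLeast_1 order_refl norm_of_int_moebius_le])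
       (simp flip: of_int_sum)
  ultimately have "((\<lambda>n. of_int (moebius n) / of_nat n * log_series_on {1..} (x ^ n)) has_sum lpop M x)
      (pop ({p. prime p} - M))"
    by simp
  then show ?thesis
  proof (rule has_sum_cong[THEN iffD1, rotated])
    fix n assume "n \<in> pop ({p. prime p} - M)"
    then have "norm (x ^ n) < 1"
      using x by (auto simp: pop_def norm_power power_less_one_iff)
    then show "of_int (moebius n) / of_nat n * log_series_on {1..} (x ^ n)
        = of_int (moebius n) / of_nat n * Ln (1 / (1 - x ^ n))"
      using log_series_on_atLeast_1 by simp
  qed
qed

lemma has_sum_moebius_lpop_primes:
  fixes s :: complex
  assumes "Re s > 1" "M \<subseteq> {p. prime p}"
  shows "((\<lambda>n. of_int (moebius n) / of_nat n * (\<Sum>\<^sub>\<infinity>p\<in>M. lpop M ((of_nat p) powr (- (of_nat n * s)))))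
           has_sum (\<Sum>\<^sub>\<infinity>p\<in>M. (of_nat p) powr (- s))) (pop M)"
proof -
  have "((\<lambda>n. of_int (moebius n) / of_nat n * (\<Sum>\<^sub>\<infinity>p\<in>M. log_series_on (pop M) ((of_nat p powr (- s)) ^ n)))
           has_sum (\<Sum>\<^sub>\<infinity>p\<in>M. of_nat p powr (- s))) (pop M)"
    using assms norm_of_int_moebius_le sum_moebius_pop_convolution[where M = M]
    by (intro has_sum_prime_lambert pop_subset_atLeast_1) (simp_all flip: of_int_sum)
  moreover have "lpop M ((of_nat p) powr (- (of_nat n * s))) = log_series_on (pop M) ((of_nat p powr (- s)) ^ n)"
    if "p \<in> M" for p n
    using that assms(2) powr_of_nat_mult_exponent[of p n s] prime_gt_0_nat
    by (auto simp: lpop_def log_series_on_def)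
  ultimately show ?thesis
    by (simp cong: infsum_cong)
qed

theorem mainTheorem8:
  fixes M :: "nat set"
  assumes "M \<subseteq> {p. prime p}"
  shows "(\<forall>s::complex. Re s > 1 \<longrightarrow>
            ((\<lambda>n. of_int (moebius n) / of_nat n * lnZ M (of_nat n * s))
               has_sum (\<Sum>\<^sub>\<infinity>p\<in>M. (of_nat p) powr (-s))) {1..})
       \<and> (\<forall>x::complex. norm x < 1 \<longrightarrow>
            ((\<lambda>n. of_int (moebius n) / of_nat n * lpop M (x ^ n)) has_sum x) (pop M))
       \<and> (\<forall>x::complex. norm x < 1 \<longrightarrow>
            ((\<lambda>n. of_int (moebius n) / of_nat n * Ln (1 / (1 - x ^ n)))
               has_sum lpop M x) (pop ({p. prime p} - M)))
       \<and> (\<forall>s::complex. Re s > 1 \<longrightarrow>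
            ((\<lambda>n. of_int (moebius n) / of_nat n *
                   (\<Sum>\<^sub>\<infinity>p\<in>M. lpop M ((of_nat p) powr (- (of_nat n * s)))))
               has_sum (\<Sum>\<^sub>\<infinity>p\<in>M. (of_nat p) powr (-s))) (pop M))"
  using has_sum_moebius_lnZ[OF _ assms] has_sum_moebius_lpop
    has_sum_moebius_log_complement has_sum_moebius_lpop_primes[OF _ assms]
  by blast

end
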